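(* Let $v\ge2$ and $M,N\in{\cal I}_v$ with $M\perp N$ with respect to the scalar product $(x,y):=\mathrm{Re}(xy^* )$. Then $$[e^M,e^N]=2\,\frac{\sin|M|}{|M|}\,\frac{\sin|N|}{|N|}\,MN .$$
   Context: ${\cal A}_v$ is the real Cayley-Dickson algebra of dimension $2^v$, $z^*$ its conjugation, $\mathrm{Re}(z)=(z+z^* )/2$, $|z|=(zz^* )^{1/2}$, ${\cal I}_v=\{z:\mathrm{Re}(z)=0\}$. For $M\in{\cal I}_v$, $e^M=\cos|M|+\frac{\sin|M|}{|M|}M$ (with $\frac{\sin|M|}{|M|}:=1$ when $M=0$). $[a,b]:=ab-ba$. *)

theory Defs
  imports Complex_Main
begin

text \<open>Elements of the real Cayley-Dickson algebra A_v of dimension 2^v are represented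
as coefficient functions nat => real vanishing at indices >= 2^v.
An element of A_(v+1) is the pair (a,b) of its lower half a (indices < 2^v) and its
upper half b (indices 2^v .. 2^(v+1)-1), with the doubling rules
  (a,b)* = (a*, -b),   (a,b)(c,d) = (ac - d* b, d a + b c*).\<close>

type_synonym cd = "nat \<Rightarrow> real"

definition CD :: "nat \<Rightarrow> cd set" where
  "CD v = {x. \<forall>i\<ge>2^v. x i = 0}"

definition cd_lo :: "nat \<Rightarrow> cd \<Rightarrow> cd" where
  "cd_lo v x = (\<lambda>i. if i < 2^v then x i else 0)"

definition cd_hi :: "nat \<Rightarrow> cd \<Rightarrow> cd" where
  "cd_hi v x = (\<lambda>i. if i < 2^v then x (i + 2^v) else 0)"

definition cd_join :: "nat \<Rightarrow> cd \<Rightarrow> cd \<Rightarrow> cd" where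
  "cd_join v a b = (\<lambda>i. if i < 2^v then a i else if i < 2^Suc v then b (i - 2^v) else 0)"

definition cd_add :: "cd \<Rightarrow> cd \<Rightarrow> cd" where
  "cd_add x y = (\<lambda>i. x i + y i)"

definition cd_sub :: "cd \<Rightarrow> cd \<Rightarrow> cd" where
  "cd_sub x y = (\<lambda>i. x i - y i)"

definition cd_scale :: "real \<Rightarrow> cd \<Rightarrow> cd" where
  "cd_scale r x = (\<lambda>i. r * x i)"

definition cd_one :: cd where
  "cd_one = (\<lambda>i. if i = 0 then 1 else 0)"

fun cd_conj :: "nat \<Rightarrow> cd \<Rightarrow> cd" where
  "cd_conj 0 x = (\<lambda>i. if i = 0 then x 0 else 0)"
| "cd_conj (Suc v) x = cd_join v (cd_conj v (cd_lo v x)) (\<lambda>i. - cd_hi v x i)"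

fun cd_mult :: "nat \<Rightarrow> cd \<Rightarrow> cd \<Rightarrow> cd" where
  "cd_mult 0 x y = (\<lambda>i. if i = 0 then x 0 * y 0 else 0)"
| "cd_mult (Suc v) x y =
     (let a = cd_lo v x; b = cd_hi v x; c = cd_lo v y; d = cd_hi v y in
      cd_join v (cd_sub (cd_mult v a c) (cd_mult v (cd_conj v d) b))
                (cd_add (cd_mult v d a) (cd_mult v b (cd_conj v c))))"

definition cd_Re :: "nat \<Rightarrow> cd \<Rightarrow> cd" where
  "cd_Re v z = cd_scale (1/2) (cd_add z (cd_conj v z))"

text \<open>|z| = (z z*)^(1/2); z z* is a real multiple of the unit, its real coefficient is index 0.\<close>
definition cd_norm :: "nat \<Rightarrow> cd \<Rightarrow> real" where
  "cd_norm v z = sqrt (cd_mult v z (cd_conj v z) 0)"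

definition cd_Im :: "nat \<Rightarrow> cd set" where
  "cd_Im v = {z \<in> CD v. cd_Re v z = (\<lambda>i. 0)}"

definition cd_inner :: "nat \<Rightarrow> cd \<Rightarrow> cd \<Rightarrow> cd" where
  "cd_inner v x y = cd_Re v (cd_mult v x (cd_conj v y))"

definition sinc :: "real \<Rightarrow> real" where
  "sinc r = (if r = 0 then 1 else sin r / r)"

definition cd_exp :: "nat \<Rightarrow> cd \<Rightarrow> cd" where
  "cd_exp v M = cd_add (cd_scale (cos (cd_norm v M)) cd_one)
                       (cd_scale (sinc (cd_norm v M)) M)"

definition cd_comm :: "nat \<Rightarrow> cd \<Rightarrow> cd \<Rightarrow> cd" where
  "cd_comm v a b = cd_sub (cd_mult v a b) (cd_mult v b a)"

end

theory Submission
  imports Defs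
begin

text \<open>Purely imaginary elements satisfy z* = -z, so orthogonality Re(M N*) = 0 says
  MN + (MN)* = 0, i.e. MN + NM = 0 after using (MN)* = N* M* = NM: orthogonal imaginary
  elements anticommute.  In the commutator of e^M = c + sM and e^N = c' + s'N the real parts
  are central and drop out, leaving s s' (MN - NM) = 2 s s' MN.  This works in every A_v.\<close>

lemma cd_lo_in_CD: "cd_lo v x \<in> CD v"
  and cd_hi_in_CD: "cd_hi v x \<in> CD v"
  by (auto simp: CD_def cd_lo_def cd_hi_def)

lemma cd_conj_in_CD: "cd_conj v x \<in> CD v"
  by (cases v) (auto simp: CD_def cd_join_def)

lemma cd_mult_in_CD: "cd_mult v x y \<in> CD v"
  by (cases v) (auto simp: CD_def Let_def cd_join_def)

lemma cd_one_in_CD: "cd_one \<in> CD v"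
  by (auto simp: CD_def cd_one_def)

lemma cd_add_in_CD: "x \<in> CD v \<Longrightarrow> y \<in> CD v \<Longrightarrow> cd_add x y \<in> CD v"
  and cd_sub_in_CD: "x \<in> CD v \<Longrightarrow> y \<in> CD v \<Longrightarrow> cd_sub x y \<in> CD v"
  and cd_scale_in_CD: "x \<in> CD v \<Longrightarrow> cd_scale r x \<in> CD v"
  by (auto simp: CD_def cd_add_def cd_sub_def cd_scale_def)

lemma cd_join_lo_hi: "x \<in> CD (Suc v) \<Longrightarrow> cd_join v (cd_lo v x) (cd_hi v x) = x"
  by (auto simp: CD_def cd_join_def cd_lo_def cd_hi_def fun_eq_iff)

lemma cd_lo_join: "a \<in> CD v \<Longrightarrow> cd_lo v (cd_join v a b) = a"
  by (auto simp: CD_def cd_lo_def cd_join_def fun_eq_iff)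

lemma cd_hi_join: "b \<in> CD v \<Longrightarrow> cd_hi v (cd_join v a b) = b"
  by (auto simp: CD_def cd_hi_def cd_join_def fun_eq_iff)

lemma cd_lo_add: "cd_lo v (cd_add x y) = cd_add (cd_lo v x) (cd_lo v y)"
  and cd_hi_add: "cd_hi v (cd_add x y) = cd_add (cd_hi v x) (cd_hi v y)"
  and cd_lo_scale: "cd_lo v (cd_scale r x) = cd_scale r (cd_lo v x)"
  and cd_hi_scale: "cd_hi v (cd_scale r x) = cd_scale r (cd_hi v x)"
  by (auto simp: cd_lo_def cd_hi_def cd_add_def cd_scale_def fun_eq_iff)

lemma cd_lo_one: "cd_lo v cd_one = cd_one"
  and cd_hi_one: "cd_hi v cd_one = (\<lambda>i. 0)"
  by (auto simp: cd_lo_def cd_hi_def cd_one_def fun_eq_iff)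

lemma cd_uminus_eq_scale: "(\<lambda>i. - x i) = cd_scale (-1) x"
  by (simp add: cd_scale_def fun_eq_iff)

lemma cd_sub_eq_add_scale: "cd_sub x y = cd_add x (cd_scale (-1) y)"
  by (simp add: cd_sub_def cd_add_def cd_scale_def fun_eq_iff)

lemma cd_conj_add: "cd_conj v (cd_add x y) = cd_add (cd_conj v x) (cd_conj v y)"
proof (induction v arbitrary: x y)
  case (Suc v)
  show ?case
    by (simp add: cd_lo_add cd_hi_add Suc.IH) (auto simp: cd_add_def cd_join_def fun_eq_iff)
qed (auto simp: cd_add_def fun_eq_iff)

lemma cd_conj_scale: "cd_conj v (cd_scale r x) = cd_scale r (cd_conj v x)"
proof (induction v arbitrary: x)
  case (Suc v)
  show ?case
    by (simp add: cd_lo_scale cd_hi_scale Suc.IH) (auto simp: cd_scale_def cd_join_def fun_eq_iff)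
qed (auto simp: cd_scale_def fun_eq_iff)

lemma cd_conj_sub: "cd_conj v (cd_sub x y) = cd_sub (cd_conj v x) (cd_conj v y)"
  by (simp add: cd_sub_eq_add_scale cd_conj_add cd_conj_scale)

(* One simultaneous induction: the doubling formula puts the left factor's halves on the right. *)
lemma cd_mult_bilinear:
  "cd_mult v (cd_add x y) z = cd_add (cd_mult v x z) (cd_mult v y z) \<and>
   cd_mult v z (cd_add x y) = cd_add (cd_mult v z x) (cd_mult v z y) \<and>
   cd_mult v (cd_scale r x) z = cd_scale r (cd_mult v x z) \<and>
   cd_mult v z (cd_scale r x) = cd_scale r (cd_mult v z x)"
proof (induction v arbitrary: x y z r)
  case (Suc v)
  show ?case
    by (simp add: Let_def cd_lo_add cd_hi_add cd_lo_scale cd_hi_scale cd_conj_add cd_conj_scale Suc.IH)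
       (auto simp: cd_add_def cd_sub_def cd_scale_def cd_join_def fun_eq_iff algebra_simps)
qed (auto simp: cd_add_def cd_scale_def fun_eq_iff algebra_simps)

lemma cd_mult_add_left: "cd_mult v (cd_add x y) z = cd_add (cd_mult v x z) (cd_mult v y z)"
  and cd_mult_add_right: "cd_mult v z (cd_add x y) = cd_add (cd_mult v z x) (cd_mult v z y)"
  and cd_mult_scale_left: "cd_mult v (cd_scale r x) z = cd_scale r (cd_mult v x z)"
  and cd_mult_scale_right: "cd_mult v z (cd_scale r x) = cd_scale r (cd_mult v z x)"
  using cd_mult_bilinear by auto

lemma cd_mult_zero_right: "cd_mult v x (\<lambda>i. 0) = (\<lambda>i. 0)"
  using cd_mult_scale_right[of v x 0 "\<lambda>i. 0"] by (simp add: cd_scale_def)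

lemma cd_mult_zero_left: "cd_mult v (\<lambda>i. 0) x = (\<lambda>i. 0)"
  using cd_mult_scale_left[of v 0 "\<lambda>i. 0" x] by (simp add: cd_scale_def)

lemma cd_conj_zero: "cd_conj v (\<lambda>i. 0) = (\<lambda>i. 0)"
  using cd_conj_scale[of v 0 "\<lambda>i. 0"] by (simp add: cd_scale_def)

lemma cd_conj_conj: "x \<in> CD v \<Longrightarrow> cd_conj v (cd_conj v x) = x"
proof (induction v arbitrary: x)
  case (Suc v)
  have "cd_conj (Suc v) (cd_conj (Suc v) x) = cd_join v (cd_lo v x) (cd_hi v x)"
    by (simp add: cd_lo_join cd_hi_join cd_conj_in_CD cd_uminus_eq_scale cd_scale_in_CD
        cd_hi_in_CD cd_lo_in_CD Suc.IH)
       (simp add: cd_scale_def)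
  then show ?case using cd_join_lo_hi[OF Suc.prems] by simp
next
  case 0
  then show ?case by (auto simp: CD_def fun_eq_iff)
qed

lemma cd_conj_mult: "cd_conj v (cd_mult v x y) = cd_mult v (cd_conj v y) (cd_conj v x)"
proof (induction v arbitrary: x y)
  case (Suc v)
  show ?case
    by (simp add: Let_def cd_lo_join cd_hi_join cd_conj_in_CD cd_uminus_eq_scale cd_scale_in_CD
        cd_hi_in_CD cd_lo_in_CD cd_mult_in_CD cd_sub_in_CD cd_add_in_CD cd_conj_scale cd_conj_sub
        cd_conj_add cd_mult_scale_left cd_mult_scale_right Suc.IH cd_conj_conj)
       (auto simp: cd_add_def cd_sub_def cd_scale_def cd_join_def fun_eq_iff algebra_simps
          cd_conj_add[unfolded cd_add_def] cd_conj_scale[unfolded cd_scale_def])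
qed (auto simp: fun_eq_iff)

lemma cd_conj_one: "cd_conj v cd_one = cd_one"
proof (induction v)
  case (Suc v)
  then show ?case
    by (simp add: cd_lo_one cd_hi_one) (auto simp: cd_join_def cd_one_def fun_eq_iff)
qed (auto simp: cd_one_def fun_eq_iff)

lemma cd_mult_one: "x \<in> CD v \<Longrightarrow> cd_mult v cd_one x = x \<and> cd_mult v x cd_one = x"
proof (induction v arbitrary: x)
  case (Suc v)
  have "cd_mult (Suc v) cd_one x = cd_join v (cd_lo v x) (cd_hi v x)"
       "cd_mult (Suc v) x cd_one = cd_join v (cd_lo v x) (cd_hi v x)"
    by (simp_all add: Let_def cd_lo_one cd_hi_one cd_mult_zero_left cd_mult_zero_right
        cd_conj_zero cd_conj_one Suc.IH cd_lo_in_CD cd_hi_in_CD)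
       (auto simp: cd_sub_def cd_add_def)
  then show ?case using cd_join_lo_hi[OF Suc.prems] by simp
qed (auto simp: cd_one_def fun_eq_iff CD_def)

lemma cd_mult_one_left: "x \<in> CD v \<Longrightarrow> cd_mult v cd_one x = x"
  and cd_mult_one_right: "x \<in> CD v \<Longrightarrow> cd_mult v x cd_one = x"
  using cd_mult_one by auto

lemma cd_conj_Im: "z \<in> cd_Im v \<Longrightarrow> cd_conj v z = cd_scale (-1) z"
  unfolding cd_Im_def cd_Re_def cd_scale_def cd_add_def fun_eq_iff
  by simp (metis add_eq_0_iff)

lemma cd_mult_anticomm_if_orthogonal:
  assumes M: "M \<in> cd_Im v" and N: "N \<in> cd_Im v"
    and orth: "cd_inner v M N = (\<lambda>i. 0)"
  shows "cd_mult v N M = cd_scale (-1) (cd_mult v M N)"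
proof -
  have N_CD: "N \<in> CD v" using N by (simp add: cd_Im_def)
  have M_conj_N: "cd_mult v M (cd_conj v N) = cd_scale (-1) (cd_mult v M N)"
    by (simp add: cd_conj_Im[OF N] cd_mult_scale_right)
  have conj_M_conj_N: "cd_conj v (cd_mult v M (cd_conj v N)) = cd_scale (-1) (cd_mult v N M)"
    by (simp add: cd_conj_mult cd_conj_conj N_CD cd_conj_Im[OF M] cd_mult_scale_right)
  have "cd_add (cd_mult v M (cd_conj v N)) (cd_conj v (cd_mult v M (cd_conj v N))) = (\<lambda>i. 0)"
    using orth unfolding cd_inner_def cd_Re_def by (auto simp: cd_scale_def cd_add_def fun_eq_iff)
  then show ?thesis
    unfolding conj_M_conj_N unfolding M_conj_N by (auto simp: cd_scale_def cd_add_def fun_eq_iff)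
qed

lemma cd_comm_real_plus_scale:
  assumes "x \<in> CD v" and "y \<in> CD v"
  shows "cd_comm v (cd_add (cd_scale a cd_one) (cd_scale b x))
                   (cd_add (cd_scale c cd_one) (cd_scale d y))
       = cd_scale (b * d) (cd_comm v x y)"
  unfolding cd_comm_def
  by (simp add: cd_mult_add_left cd_mult_add_right cd_mult_scale_left cd_mult_scale_right
      cd_mult_one_left cd_mult_one_right cd_one_in_CD assms)
     (auto simp: cd_scale_def cd_add_def cd_sub_def fun_eq_iff algebra_simps)

theorem lemma11:
  fixes v :: nat and M N :: cd
  assumes "v \<ge> 2"
    and "M \<in> cd_Im v" and "N \<in> cd_Im v"
    and "cd_inner v M N = (\<lambda>i. 0)"
  shows "cd_comm v (cd_exp v M) (cd_exp v N) =
         cd_scale (2 * sinc (cd_norm v M) * sinc (cd_norm v N)) (cd_mult v M N)"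
proof -
  have "M \<in> CD v" "N \<in> CD v" using assms(2,3) by (auto simp: cd_Im_def)
  then have "cd_comm v (cd_exp v M) (cd_exp v N)
      = cd_scale (sinc (cd_norm v M) * sinc (cd_norm v N)) (cd_comm v M N)"
    unfolding cd_exp_def by (rule cd_comm_real_plus_scale)
  also have "cd_comm v M N = cd_scale 2 (cd_mult v M N)"
    using cd_mult_anticomm_if_orthogonal[OF assms(2-4)]
    by (simp add: cd_comm_def cd_scale_def cd_sub_def fun_eq_iff)
  finally show ?thesis by (simp add: cd_scale_def fun_eq_iff)
qed

end
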